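(* Consider control protocol (C4) with $r_1=\cdots=r_n\in[\frac1{n-1},1)$, and let $c_\eta=\frac{2\eta(n-1)}{n}$. If $\eta\le\frac{nr_1}{2(n-1)}$, then for any $\varepsilon>0$ the set $E'_\varepsilon=\{(x_1,\dots,x_n)\in[0,1]^n: c_\eta-\varepsilon\le\max_{i,j}|x_i-x_j|\le c_\eta\}$ is finite-time robustly reachable from $[0,1]^n$.
   Context: Fix $n\ge3$, $\mathcal V=\{1,\dots,n\}$, confidence thresholds $r_i\in(0,1]$, $\eta>0$. States $x(t)\in[0,1]^n$. Neighbor set $\mathcal N_i(t)=\{j:|x_j(t)-x_i(t)|\le r_i\}$ (contains $i$), $\Pi_{[0,1]}(y)=\min\{1,\max\{0,y\}\}$. Control protocol (C4): $x_i(t+1)=\Pi_{[0,1]}\big(|\mathcal N_i(t)|^{-1}[x_i(t)+\sum_{j\in\mathcal N_i(t)\setminus\{i\}}(x_j(t)+u_{ji}(t)+b_{ji}(t))]\big)$, where for $j\in\mathcal N_i(t)\setminus\{i\}$: $\delta_i(t)\in(0,\eta)$ is a chosen parameter, $u_{ji}(t)\in[-\eta+\delta_i(t),\eta-\delta_i(t)]$ a chosen control input, $b_{ji}(t)\in[-\delta_i(t),\delta_i(t)]$ an arbitrary uncertainty; the choices may depend on $x(0),\dots,x(t)$. A set $S\subseteq[0,1]^n$ is finite-time robustly reachable from $[0,1]^n$ under the protocol if there exist constants $T>0$ and $\varepsilon'\in(0,\eta)$ such that for every $x(0)\in[0,1]^n$, either $x(0)\in S$, or one can choose $\delta_i(t)\in[\varepsilon',\eta)$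 and $u_{ji}(t)\in[-\eta+\delta_i(t),\eta-\delta_i(t)]$ ($0\le t<T$, $i\in\mathcal V$, $j\in\mathcal N_i(t)\setminus\{i\}$) guaranteeing that for arbitrary $b_{ji}(t)\in[-\delta_i(t),\delta_i(t)]$ there is $t\in[1,T]$ with $x(t)\in S$. *)

theory Defs
  imports Complex_Main
begin

text \<open>Agents are indexed by 1..n; a state is a function nat => real whose values
  outside 1..n are irrelevant.\<close>

definition proj01 :: "real \<Rightarrow> real" where
  "proj01 y = min 1 (max 0 y)"

definition nbrs :: "nat \<Rightarrow> (nat \<Rightarrow> real) \<Rightarrow> (nat \<Rightarrow> real) \<Rightarrow> nat \<Rightarrow> nat set" where
  "nbrs n r x i = {j \<in> {1..n}. \<bar>x j - x i\<bar> \<le> r i}"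

text \<open>One step of protocol (C4): u j i = u_{ji}(t), b j i = b_{ji}(t).\<close>
definition step_C4 :: "nat \<Rightarrow> (nat \<Rightarrow> real) \<Rightarrow> (nat \<Rightarrow> real)
    \<Rightarrow> (nat \<Rightarrow> nat \<Rightarrow> real) \<Rightarrow> (nat \<Rightarrow> nat \<Rightarrow> real) \<Rightarrow> (nat \<Rightarrow> real)" where
  "step_C4 n r x u b = (\<lambda>i. proj01 ((x i + (\<Sum>j\<in>nbrs n r x i - {i}. x j + u j i + b j i))
                                       / real (card (nbrs n r x i))))"

text \<open>History [x(0),...,x(t)] of the closed loop under a feedback strategy us
  (depending on the whole history) and a disturbance sequence b (b t j i = b_{ji}(t)).\<close>
primrec hist_C4 :: "nat \<Rightarrow> (nat \<Rightarrow> real) \<Rightarrow> ((nat \<Rightarrow> real) list \<Rightarrow> nat \<Rightarrow> nat \<Rightarrow> real)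
    \<Rightarrow> (nat \<Rightarrow> nat \<Rightarrow> nat \<Rightarrow> real) \<Rightarrow> (nat \<Rightarrow> real) \<Rightarrow> nat \<Rightarrow> (nat \<Rightarrow> real) list" where
  "hist_C4 n r us b x0 0 = [x0]"
| "hist_C4 n r us b x0 (Suc t) =
     hist_C4 n r us b x0 t @ [step_C4 n r (last (hist_C4 n r us b x0 t)) (us (hist_C4 n r us b x0 t)) (b t)]"

definition in_cube :: "nat \<Rightarrow> (nat \<Rightarrow> real) \<Rightarrow> bool" where
  "in_cube n x \<longleftrightarrow> (\<forall>i\<in>{1..n}. 0 \<le> x i \<and> x i \<le> 1)"

text \<open>The parameters delta_i(t) and inputs u_{ji}(t) are given by feedback maps of the
  history x(0),...,x(t); the disturbance is arbitrary within its bounds.\<close>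
definition rob_reachable_C4 :: "nat \<Rightarrow> (nat \<Rightarrow> real) \<Rightarrow> real \<Rightarrow> (nat \<Rightarrow> real) set \<Rightarrow> bool" where
  "rob_reachable_C4 n r \<eta> S \<longleftrightarrow>
    (\<exists>T::nat. T > 0 \<and> (\<exists>\<epsilon>'. 0 < \<epsilon>' \<and> \<epsilon>' < \<eta> \<and>
      (\<forall>x0. in_cube n x0 \<longrightarrow> x0 \<in> S \<or>
        (\<exists>(\<delta>s :: (nat \<Rightarrow> real) list \<Rightarrow> nat \<Rightarrow> real) us.
           (\<forall>h. \<forall>i\<in>{1..n}. \<epsilon>' \<le> \<delta>s h i \<and> \<delta>s h i < \<eta>) \<and>
           (\<forall>h. \<forall>i\<in>{1..n}. \<forall>j\<in>{1..n}. - \<eta> + \<delta>s h i \<le> us h j i \<and> us h j i \<le> \<eta> - \<delta>s h i) \<and>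
           (\<forall>b. (\<forall>t<T. \<forall>i\<in>{1..n}. \<forall>j\<in>{1..n}.
                    \<bar>b t j i\<bar> \<le> \<delta>s (hist_C4 n r us b x0 t) i)
                \<longrightarrow> (\<exists>t\<in>{1..T}. last (hist_C4 n r us b x0 t) \<in> S))))))"

definition E'_set :: "nat \<Rightarrow> real \<Rightarrow> real \<Rightarrow> (nat \<Rightarrow> real) set" where
  "E'_set n c \<epsilon> = {x. in_cube n x \<and>
      c - \<epsilon> \<le> Max {\<bar>x i - x j\<bar> | i j. i \<in> {1..n} \<and> j \<in> {1..n}} \<and>
      Max {\<bar>x i - x j\<bar> | i j. i \<in> {1..n} \<and> j \<in> {1..n}} \<le> c}"

end

theory Submission
  imports Defs
begin

text \<open>The controller keeps the uncertainty level \<open>\<delta> = d\<close> fixed, small compared with \<open>\<eta>\<close>,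
  \<open>\<epsilon>\<close>, \<open>\<rho>\<close> and \<open>1 - \<rho>\<close>, and runs through four phases.
  (1) All inputs are \<open>-2d\<close>, so every perturbation is at most \<open>-d\<close>: an agent that has a neighbour,
  or lies below one that has, moves down by \<open>d/2\<close> per step until it reaches 0, while the isolated
  agents at the top never move. As \<open>\<rho> \<ge> 1/(n-1)\<close>, some two agents are neighbours, so after
  \<open>M \<ge> 2/d\<close> steps a cluster of at least two agents sits at 0.
  (2) All inputs are \<open>+2d\<close>: the cluster rises by \<open>d/2\<close> per step as a group of mutual
  neighbours and absorbs the isolated agents one at a time; since it cannot pass 1, within \<open>M\<close>
  steps every agent is a neighbour of every other one.
  (3) From then on each update is the common mean plus the averaged perturbation, and inputs
  \<open>\<plusminus>2d\<close> move the mean into \<open>[c/2, 1 - c/2]\<close>.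
  (4) One step with inputs \<open>\<eta> - d\<close> towards agent 1 and \<open>-(\<eta> - d)\<close> towards agent 2 puts
  these two at distance \<open>c - O(d)\<close>, where \<open>c = 2\<eta>(n-1)/n\<close> is the spread that perturbations
  \<open>\<plusminus>\<eta>\<close> can produce in an average over \<open>n\<close> agents, while no agent leaves
  \<open>[mean - c/2, mean + c/2]\<close>.\<close>

lemma proj01_le_max: "proj01 y \<le> max 0 y"
  by (simp add: proj01_def)

lemma min_le_proj01: "min 1 y \<le> proj01 y"
  by (simp add: proj01_def)

lemma proj01_in_unit: "0 \<le> proj01 y" "proj01 y \<le> 1"
  by (simp_all add: proj01_def)

lemma proj01_id: "0 \<le> y \<Longrightarrow> y \<le> 1 \<Longrightarrow> proj01 y = y"
  by (simp add: proj01_def)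

lemma proj01_dist_le: "\<bar>proj01 a - proj01 b\<bar> \<le> \<bar>a - b\<bar>"
  by (simp add: proj01_def abs_if min_def max_def)

lemma finite_nbrs: "finite (nbrs n r x i)"
  by (simp add: nbrs_def)

lemma self_in_nbrs: "i \<in> {1..n} \<Longrightarrow> 0 \<le> \<rho> \<Longrightarrow> i \<in> nbrs n (\<lambda>_. \<rho>) x i"
  by (simp add: nbrs_def)

lemma nbrs_subset: "nbrs n r x i \<subseteq> {1..n}"
  by (auto simp: nbrs_def)

lemma one_le_card_nbrs: "i \<in> {1..n} \<Longrightarrow> 0 \<le> \<rho> \<Longrightarrow> 1 \<le> card (nbrs n (\<lambda>_. \<rho>) x i)"
  by (metis One_nat_def Suc_leI card_gt_0_iff empty_iff finite_nbrs self_in_nbrs)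

lemma two_le_card_nbrs:
  assumes "i \<in> {1..n}" "0 \<le> \<rho>" "j \<in> {1..n}" "j \<noteq> i" "\<bar>x j - x i\<bar> \<le> \<rho>"
  shows "2 \<le> card (nbrs n (\<lambda>_. \<rho>) x i)"
proof -
  have "{i, j} \<subseteq> nbrs n (\<lambda>_. \<rho>) x i" using assms by (auto simp: nbrs_def)
  then have "card {i, j} \<le> card (nbrs n (\<lambda>_. \<rho>) x i)" using card_mono[OF finite_nbrs] by blast
  then show ?thesis using assms(4) by simp
qed

lemma nbrs_subsetI: "\<forall>j\<in>{1..n} - S. \<rho> < \<bar>x j - x i\<bar> \<Longrightarrow> nbrs n (\<lambda>_. \<rho>) x i \<subseteq> S"
  unfolding nbrs_def by force

lemma nbrs_eqI:
  "S \<subseteq> {1..n} \<Longrightarrow> \<forall>j\<in>S. \<bar>x j - x i\<bar> \<le> \<rho> \<Longrightarrow> \<forall>j\<in>{1..n} - S. \<rho> < \<bar>x j - x i\<bar>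
    \<Longrightarrow> nbrs n (\<lambda>_. \<rho>) x i = S"
  unfolding nbrs_def by force

definition avg_update :: "nat \<Rightarrow> real \<Rightarrow> (nat \<Rightarrow> real) \<Rightarrow> (nat \<Rightarrow> nat \<Rightarrow> real) \<Rightarrow> nat \<Rightarrow> real" where
  "avg_update n \<rho> x w i =
     ((\<Sum>j\<in>nbrs n (\<lambda>_. \<rho>) x i. x j) + (\<Sum>j\<in>nbrs n (\<lambda>_. \<rho>) x i - {i}. w j i))
       / real (card (nbrs n (\<lambda>_. \<rho>) x i))"

lemma step_C4_eq_avg_update:
  assumes "i \<in> {1..n}" "0 \<le> \<rho>"
  shows "step_C4 n (\<lambda>_. \<rho>) x u b i = proj01 (avg_update n \<rho> x (\<lambda>j i. u j i + b j i) i)"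
proof -
  let ?N = "nbrs n (\<lambda>_. \<rho>) x i"
  have "x i + (\<Sum>j\<in>?N - {i}. x j + u j i + b j i)
      = (x i + (\<Sum>j\<in>?N - {i}. x j)) + (\<Sum>j\<in>?N - {i}. u j i + b j i)"
    by (simp add: sum.distrib add.assoc)
  also have "x i + (\<Sum>j\<in>?N - {i}. x j) = (\<Sum>j\<in>?N. x j)"
    using sum.remove[OF finite_nbrs self_in_nbrs[OF assms], of x] by simp
  finally show ?thesis unfolding step_C4_def avg_update_def by simp
qed

lemma scaled_frac_le: "1 \<le> (k::real) \<Longrightarrow> 0 \<le> h \<Longrightarrow> h * (k - 1) / k \<le> h"
  by (simp add: divide_le_eq mult_left_mono)

lemma half_le_scaled_frac:
  assumes "2 \<le> (k::real)" "0 \<le> h" shows "h / 2 \<le> h * (k - 1) / k"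
proof -
  have "h * 2 \<le> h * k" using assms by (intro mult_left_mono) auto
  then show ?thesis using assms(1) by (simp add: le_divide_eq algebra_simps)
qed

lemma avg_update_le:
  assumes "i \<in> {1..n}" "0 \<le> \<rho>"
    and "(\<Sum>j\<in>nbrs n (\<lambda>_. \<rho>) x i. x j) \<le> real (card (nbrs n (\<lambda>_. \<rho>) x i)) * A"
    and "\<forall>j\<in>{1..n}. w j i \<le> h"
  shows "avg_update n \<rho> x w i
    \<le> A + h * (real (card (nbrs n (\<lambda>_. \<rho>) x i)) - 1) / real (card (nbrs n (\<lambda>_. \<rho>) x i))"
proof -
  let ?N = "nbrs n (\<lambda>_. \<rho>) x i"
  let ?k = "real (card ?N)"
  have k: "1 \<le> ?k" using one_le_card_nbrs[OF assms(1,2)] by simp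
  have "(\<Sum>j\<in>?N - {i}. w j i) \<le> real (card (?N - {i})) * h"
    using sum_bounded_above[of "?N - {i}" "\<lambda>j. w j i" h] assms(4) nbrs_subset by blast
  also have "real (card (?N - {i})) = ?k - 1"
    using self_in_nbrs[OF assms(1,2)] k by (simp add: finite_nbrs of_nat_diff)
  finally have "(\<Sum>j\<in>?N - {i}. w j i) \<le> (?k - 1) * h" .
  then have "avg_update n \<rho> x w i \<le> (?k * A + (?k - 1) * h) / ?k"
    unfolding avg_update_def using assms(3) k by (intro divide_right_mono) auto
  also have "\<dots> = A + h * (?k - 1) / ?k" using k by (simp add: field_simps)
  finally show ?thesis .
qed

lemma avg_update_ge:
  assumes "i \<in> {1..n}" "0 \<le> \<rho>"
    and "real (card (nbrs n (\<lambda>_. \<rho>) x i)) * A \<le> (\<Sum>j\<in>nbrs n (\<lambda>_. \<rho>) x i. x j)"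
    and "\<forall>j\<in>{1..n}. h \<le> w j i"
  shows "A + h * (real (card (nbrs n (\<lambda>_. \<rho>) x i)) - 1) / real (card (nbrs n (\<lambda>_. \<rho>) x i))
    \<le> avg_update n \<rho> x w i"
proof -
  let ?N = "nbrs n (\<lambda>_. \<rho>) x i"
  let ?k = "real (card ?N)"
  have k: "1 \<le> ?k" using one_le_card_nbrs[OF assms(1,2)] by simp
  have "real (card (?N - {i})) * h \<le> (\<Sum>j\<in>?N - {i}. w j i)"
    using sum_bounded_below[of "?N - {i}" h "\<lambda>j. w j i"] assms(4) nbrs_subset by blast
  moreover have "real (card (?N - {i})) = ?k - 1"
    using self_in_nbrs[OF assms(1,2)] k by (simp add: finite_nbrs of_nat_diff)
  ultimately have "(?k - 1) * h \<le> (\<Sum>j\<in>?N - {i}. w j i)" by simp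
  then have "(?k * A + (?k - 1) * h) / ?k \<le> avg_update n \<rho> x w i"
    unfolding avg_update_def using assms(3) k by (intro divide_right_mono) auto
  moreover have "(?k * A + (?k - 1) * h) / ?k = A + h * (?k - 1) / ?k" using k by (simp add: field_simps)
  ultimately show ?thesis by simp
qed

section \<open>Isolated agents and the downward sweep\<close>

lemma separated_set_spread:
  fixes A :: "real set"
  assumes "finite A" "card A = Suc (Suc k)" "\<forall>a\<in>A. \<forall>b\<in>A. a \<noteq> b \<longrightarrow> \<rho> < \<bar>a - b\<bar>"
  shows "\<exists>lo\<in>A. \<exists>hi\<in>A. real (Suc k) * \<rho> < hi - lo"
  using assms
proof (induction k arbitrary: A)
  case 0
  then obtain a b where ab: "A = {a, b}" "a \<noteq> b" by (metis card_2_iff numeral_2_eq_2)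
  then have "\<rho> < \<bar>a - b\<bar>" using 0 by auto
  then show ?case using ab by (cases "a \<le> b") auto
next
  case (Suc k)
  let ?m = "Max A"
  have m: "?m \<in> A" using Max_in Suc.prems by fastforce
  obtain lo hi where lh: "lo \<in> A - {?m}" "hi \<in> A - {?m}" "real (Suc k) * \<rho> < hi - lo"
    using Suc.IH[of "A - {?m}"] Suc.prems m by auto
  have "hi \<le> ?m" "\<rho> < \<bar>?m - hi\<bar>" using lh Suc.prems m by auto
  then have "real (Suc (Suc k)) * \<rho> < ?m - lo" using lh by (simp add: algebra_simps)
  then show ?case using m lh by blast
qed

text \<open>This is where \<open>\<rho> \<ge> 1/(n-1)\<close> enters: \<open>n\<close> points of \<open>[0,1]\<close> that are pairwise more
  than \<open>\<rho>\<close> apart would span more than \<open>(n-1)\<rho> \<ge> 1\<close>.\<close>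
lemma exists_neighbour_pair:
  assumes n2: "2 \<le> n" and r: "1 / real (n - 1) \<le> \<rho>" and cube: "in_cube n x"
  shows "\<exists>i\<in>{1..n}. \<exists>j\<in>{1..n}. i \<noteq> j \<and> \<bar>x i - x j\<bar> \<le> \<rho>"
proof (rule ccontr)
  assume "\<not> ?thesis"
  then have gap: "\<forall>i\<in>{1..n}. \<forall>j\<in>{1..n}. i \<noteq> j \<longrightarrow> \<rho> < \<bar>x i - x j\<bar>"
    by (meson not_le)
  have n1: "0 < real (n - 1)" using n2 by simp
  then have "0 < \<rho>" using r by (meson divide_pos_pos less_le_trans zero_less_one)
  have "inj_on x {1..n}"
  proof (rule inj_onI, rule ccontr)
    fix i j assume "i \<in> {1..n}" "j \<in> {1..n}" "x i = x j" "i \<noteq> j"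
    then show False using gap \<open>0 < \<rho>\<close> by force
  qed
  then have "card (x ` {1..n}) = Suc (Suc (n - 2))" using n2 by (simp add: card_image)
  moreover have "\<forall>a\<in>x ` {1..n}. \<forall>b\<in>x ` {1..n}. a \<noteq> b \<longrightarrow> \<rho> < \<bar>a - b\<bar>"
  proof (intro ballI impI)
    fix a b assume "a \<in> x ` {1..n}" "b \<in> x ` {1..n}" "a \<noteq> b"
    then obtain i j where "i \<in> {1..n}" "j \<in> {1..n}" "a = x i" "b = x j" "i \<noteq> j" by blast
    then show "\<rho> < \<bar>a - b\<bar>" using gap by blast
  qed
  ultimately obtain lo hi where lh: "lo \<in> x ` {1..n}" "hi \<in> x ` {1..n}"
      "real (Suc (n - 2)) * \<rho> < hi - lo"
    using separated_set_spread[of "x ` {1..n}" "n - 2" \<rho>] by blast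
  have "hi - lo \<le> 1"
  proof -
    obtain a b where ab: "a \<in> {1..n}" "b \<in> {1..n}" "hi = x a" "lo = x b" using lh(1,2) by blast
    then have "x a \<le> 1" "0 \<le> x b" using cube unfolding in_cube_def by auto
    then show ?thesis using ab by simp
  qed
  moreover have "real (Suc (n - 2)) = real (n - 1)" using n2 by (simp add: Suc_diff_Suc numeral_2_eq_2)
  moreover have "1 \<le> real (n - 1) * \<rho>" using r n1 by (simp add: divide_le_eq mult.commute)
  ultimately show False using lh(3) by simp
qed

definition isolated :: "nat \<Rightarrow> real \<Rightarrow> (nat \<Rightarrow> real) \<Rightarrow> nat \<Rightarrow> bool" where
  "isolated n \<rho> x i \<longleftrightarrow> (\<forall>j\<in>{1..n}. j \<noteq> i \<longrightarrow> \<rho> < \<bar>x j - x i\<bar>)"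

lemma isolated_nbrs: "i \<in> {1..n} \<Longrightarrow> 0 \<le> \<rho> \<Longrightarrow> isolated n \<rho> x i \<Longrightarrow> nbrs n (\<lambda>_. \<rho>) x i = {i}"
  unfolding isolated_def nbrs_def by (safe; force)

lemma isolated_update_fixed:
  assumes "i \<in> {1..n}" "0 \<le> \<rho>" "in_cube n x" "isolated n \<rho> x i"
  shows "proj01 (avg_update n \<rho> x w i) = x i"
  using assms isolated_nbrs[OF assms(1,2,4)] by (simp add: avg_update_def proj01_id in_cube_def)

text \<open>These agents never move while everybody is pushed down: the others stay more than \<open>\<rho>\<close>
  below them.\<close>
definition top_isolated :: "nat \<Rightarrow> real \<Rightarrow> (nat \<Rightarrow> real) \<Rightarrow> nat set" where
  "top_isolated n \<rho> x = {i\<in>{1..n}. \<forall>j\<in>{1..n}. x i \<le> x j \<longrightarrow> isolated n \<rho> x j}"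

lemma top_isolated_isolated: "f \<in> top_isolated n \<rho> x \<Longrightarrow> isolated n \<rho> x f"
  unfolding top_isolated_def by blast

lemma below_top_isolated:
  assumes f: "f \<in> top_isolated n \<rho> x" and j: "j \<in> {1..n} - top_isolated n \<rho> x"
  shows "x j < x f - \<rho>"
proof -
  have "\<not> x f \<le> x j" using f j by (auto simp: top_isolated_def)
  moreover have "j \<noteq> f" using f j by blast
  then have "\<rho> < \<bar>x j - x f\<bar>" using top_isolated_isolated[OF f] j by (simp add: isolated_def)
  ultimately show ?thesis by auto
qed

lemma two_not_top_isolated:
  assumes "2 \<le> n" "1 / real (n - 1) \<le> \<rho>" "in_cube n x"
  shows "\<exists>i\<in>{1..n} - top_isolated n \<rho> x. \<exists>j\<in>{1..n} - top_isolated n \<rho> x. i \<noteq> j"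
proof -
  obtain i j where ij: "i \<in> {1..n}" "j \<in> {1..n}" "i \<noteq> j" "\<bar>x i - x j\<bar> \<le> \<rho>"
    using exists_neighbour_pair[OF assms] by blast
  then have "\<not> isolated n \<rho> x i" "\<not> isolated n \<rho> x j"
    by (auto simp: isolated_def abs_minus_commute)
  then show ?thesis using ij top_isolated_isolated by blast
qed

lemma descent_step_bound:
  assumes r0: "0 \<le> \<rho>" and d: "0 < d" "d \<le> \<rho>" and cube: "in_cube n x"
    and w: "\<forall>i\<in>{1..n}. \<forall>j\<in>{1..n}. w j i \<le> -d"
    and x': "\<forall>i\<in>{1..n}. x' i = proj01 (avg_update n \<rho> x w i)"
    and P: "\<forall>j\<in>{1..n} - top_isolated n \<rho> x. x j \<le> P"
    and r: "r \<in> {1..n} - top_isolated n \<rho> x"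
  shows "x' r \<le> max 0 (P - d/2)"
proof (cases "isolated n \<rho> x r")
  case True
  then have "x' r = x r" using x' r isolated_update_fixed[OF _ r0 cube] by auto
  moreover obtain j where j: "j \<in> {1..n}" "x r \<le> x j" "\<not> isolated n \<rho> x j"
    using r by (auto simp: top_isolated_def)
  then have "x j \<le> P" using P top_isolated_isolated by blast
  moreover have "j \<noteq> r" using True j(3) by blast
  then have "\<rho> < \<bar>x j - x r\<bar>" using True j(1) by (simp add: isolated_def)
  ultimately show ?thesis using j d by auto
next
  case False
  let ?N = "nbrs n (\<lambda>_. \<rho>) x r"
  let ?k = "real (card ?N)"
  have rV: "r \<in> {1..n}" using r by blast
  have "\<not> isolated n \<rho> x j" if "j \<in> ?N" "j \<noteq> r" for j
    using that rV by (auto simp: isolated_def nbrs_def abs_minus_commute)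
  then have "\<forall>j\<in>?N. x j \<le> P" using P r top_isolated_isolated nbrs_subset by blast
  then have "(\<Sum>j\<in>?N. x j) \<le> ?k * P" using sum_bounded_above[of ?N x P] by simp
  then have up: "avg_update n \<rho> x w r \<le> P + (-d) * (?k - 1) / ?k"
    using avg_update_le[OF rV r0, of x P w "-d"] w rV by blast
  obtain j where "j \<in> {1..n}" "j \<noteq> r" "\<bar>x j - x r\<bar> \<le> \<rho>" using False by (auto simp: isolated_def)
  then have "2 \<le> ?k" using two_le_card_nbrs[OF rV r0] by fastforce
  then have "d / 2 \<le> d * (?k - 1) / ?k" using half_le_scaled_frac d by simp
  then show ?thesis using up x' rV proj01_le_max[of "avg_update n \<rho> x w r"] by auto
qed

lemma top_isolated_mono:
  assumes n2: "2 \<le> n" and rr: "1 / real (n - 1) \<le> \<rho>" and r0: "0 \<le> \<rho>"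
    and d: "0 < d" "d \<le> \<rho>" and cube: "in_cube n x"
    and w: "\<forall>i\<in>{1..n}. \<forall>j\<in>{1..n}. w j i \<le> -d"
    and x': "\<forall>i\<in>{1..n}. x' i = proj01 (avg_update n \<rho> x w i)"
  shows "top_isolated n \<rho> x \<subseteq> top_isolated n \<rho> x'"
proof
  let ?T = "top_isolated n \<rho> x"
  have fixed: "x' f = x f" if f: "f \<in> ?T" for f
  proof -
    have "f \<in> {1..n}" using f by (simp add: top_isolated_def)
    then show ?thesis using x' isolated_update_fixed[OF _ r0 cube top_isolated_isolated[OF f]] by simp
  qed
  have low: "x' j < x f - \<rho>" if f: "f \<in> ?T" and j: "j \<in> {1..n} - ?T" for f j
  proof -
    obtain i0 where i0: "i0 \<in> {1..n} - ?T" using two_not_top_isolated[OF n2 rr cube] by blast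
    have "0 \<le> x i0" using i0 cube by (simp add: in_cube_def)
    then have pos: "0 < x f - \<rho>" using below_top_isolated[OF f i0] by linarith
    have "\<forall>j\<in>{1..n} - ?T. x j \<le> x f - \<rho>" using below_top_isolated[OF f] less_imp_le by blast
    then have "x' j \<le> max 0 (x f - \<rho> - d/2)" by (rule descent_step_bound[OF r0 d cube w x' _ j])
    then show ?thesis using pos d by simp
  qed
  have isolated': "isolated n \<rho> x' f" if f: "f \<in> ?T" for f
    unfolding isolated_def
  proof (intro ballI impI)
    fix j assume j: "j \<in> {1..n}" "j \<noteq> f"
    show "\<rho> < \<bar>x' j - x' f\<bar>"
    proof (cases "j \<in> ?T")
      case True
      then show ?thesis
        using top_isolated_isolated[OF f] fixed[OF f] fixed[OF True] j by (simp add: isolated_def)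
    next
      case False
      then show ?thesis using low[OF f, of j] fixed[OF f] j r0 by simp
    qed
  qed
  fix f assume f: "f \<in> ?T"
  have "isolated n \<rho> x' j" if "j \<in> {1..n}" "x' f \<le> x' j" for j
  proof (cases "j \<in> ?T")
    case True
    then show ?thesis by (rule isolated')
  next
    case False
    then show ?thesis using low[OF f, of j] that fixed[OF f] r0 by simp
  qed
  then show "f \<in> top_isolated n \<rho> x'" using f by (auto simp: top_isolated_def)
qed

section \<open>The gathering invariant\<close>

definition all_adjacent :: "nat \<Rightarrow> real \<Rightarrow> (nat \<Rightarrow> real) \<Rightarrow> bool" where
  "all_adjacent n \<rho> x \<longleftrightarrow> (\<forall>i\<in>{1..n}. \<forall>j\<in>{1..n}. \<bar>x i - x j\<bar> \<le> \<rho>)"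

text \<open>By the last clause the cluster is either tight or, right after
  absorbing an agent, well separated from the rest; as only a tight cluster can absorb, its width
  stays below \<open>\<rho>\<close>.\<close>
definition gathering :: "nat \<Rightarrow> real \<Rightarrow> real \<Rightarrow> (nat \<Rightarrow> real) \<Rightarrow> nat set \<Rightarrow> bool" where
  "gathering n \<rho> d x G \<longleftrightarrow> G \<subseteq> {1..n} \<and> 2 \<le> card G \<and>
     (\<forall>f\<in>{1..n} - G. \<forall>g\<in>G. x g + \<rho> - 4*d < x f) \<and>
     (\<forall>f\<in>{1..n} - G. \<forall>f'\<in>{1..n} - G. f \<noteq> f' \<longrightarrow> \<rho> < \<bar>x f - x f'\<bar>) \<and>
     (\<forall>g\<in>G. \<forall>g'\<in>G. \<bar>x g - x g'\<bar> \<le> \<rho>) \<and>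
     ((\<forall>g\<in>G. \<forall>g'\<in>G. \<bar>x g - x g'\<bar> \<le> 3*d) \<or> (\<forall>f\<in>{1..n} - G. \<forall>g\<in>G. x g + \<rho> + 4*d < x f))"

lemma sum_le_with_one_outlier:
  assumes "finite N" "\<forall>j\<in>N - {f}. x j \<le> M" "M \<le> x f" "\<exists>j\<in>N. j \<noteq> f"
  shows "(\<Sum>j\<in>N. x j) \<le> real (card N) * ((M + x f) / 2)"
proof (cases "f \<in> N")
  case True
  let ?k = "real (card N)"
  obtain j where "j \<in> N" "j \<noteq> f" using assms(4) by blast
  then have "card {f, j} \<le> card N" using True card_mono[OF assms(1)] by (metis empty_subsetI insert_subset)
  then have k2: "2 \<le> ?k" using \<open>j \<noteq> f\<close> by simp
  have "(\<Sum>j\<in>N. x j) = x f + (\<Sum>j\<in>N - {f}. x j)" using sum.remove[OF assms(1) True] by simp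
  also have "(\<Sum>j\<in>N - {f}. x j) \<le> real (card (N - {f})) * M"
    using sum_bounded_above[of "N - {f}" x M] assms(2) by simp
  also have "real (card (N - {f})) = ?k - 1" using True assms(1) k2 by (simp add: of_nat_diff)
  finally have s: "(\<Sum>j\<in>N. x j) \<le> x f + (?k - 1) * M" by simp
  have "(?k - 2) * M \<le> (?k - 2) * x f" using k2 assms(3) by (intro mult_left_mono) auto
  then show ?thesis using s by (simp add: algebra_simps)
next
  case False
  then have "(\<Sum>j\<in>N. x j) \<le> real (card N) * M" using sum_bounded_above[of N x M] assms(2) by auto
  also have "\<dots> \<le> real (card N) * ((M + x f) / 2)" using assms(3) by (intro mult_left_mono) auto
  finally show ?thesis .
qed

lemma gathering_step_detached:
  assumes r0: "0 \<le> \<rho>" and d: "0 < d" "3*d \<le> \<rho>"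
    and inv: "gathering n \<rho> d x G" and cube: "in_cube n x"
    and w: "\<forall>i\<in>{1..n}. \<forall>j\<in>{1..n}. d \<le> w j i \<and> w j i \<le> 3*d"
    and x': "\<forall>i\<in>{1..n}. x' i = proj01 (avg_update n \<rho> x w i)"
    and mu: "\<forall>g\<in>G. \<mu> \<le> x g"
    and detached: "\<forall>f\<in>{1..n} - G. \<forall>g\<in>G. \<rho> < \<bar>x f - x g\<bar>"
  shows "gathering n \<rho> d x' G \<and> (\<forall>g\<in>G. min 1 (\<mu> + d/2) \<le> x' g)"
proof -
  let ?V = "{1..n::nat}"
  have GV: "G \<subseteq> ?V" and cG: "2 \<le> card G"
    and outside_above: "\<forall>f\<in>?V - G. \<forall>g\<in>G. x g + \<rho> - 4*d < x f"
    and outside_apart: "\<forall>f\<in>?V - G. \<forall>f'\<in>?V - G. f \<noteq> f' \<longrightarrow> \<rho> < \<bar>x f - x f'\<bar>"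
    and cluster_close: "\<forall>g\<in>G. \<forall>g'\<in>G. \<bar>x g - x g'\<bar> \<le> \<rho>"
    using inv unfolding gathering_def by blast+
  have above: "x g + \<rho> < x f" if "f \<in> ?V - G" "g \<in> G" for f g
  proof -
    have "x g + \<rho> - 4*d < x f" "\<rho> < \<bar>x f - x g\<bar>" using outside_above detached that by blast+
    then show ?thesis using d by linarith
  qed
  have NG: "nbrs n (\<lambda>_. \<rho>) x g = G" if "g \<in> G" for g
    using nbrs_eqI[OF GV] cluster_close detached that by (simp add: abs_minus_commute)
  have fixed: "x' f = x f" if f: "f \<in> ?V - G" for f
  proof -
    have "isolated n \<rho> x f"
      unfolding isolated_def using detached outside_apart f by (metis Diff_iff abs_minus_commute)
    then show ?thesis using x' f isolated_update_fixed[OF _ r0 cube] by auto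
  qed
  let ?k = "real (card G)"
  let ?A = "(\<Sum>j\<in>G. x j) / ?k"
  have k2: "2 \<le> ?k" using cG by simp
  define e where "e = d * (?k - 1) / ?k"
  have e: "d/2 \<le> e" "e \<le> d" unfolding e_def using half_le_scaled_frac[OF k2] scaled_frac_le[of ?k d] k2 d by auto
  have bounds: "?A + e \<le> avg_update n \<rho> x w g \<and> avg_update n \<rho> x w g \<le> ?A + 3*e
      \<and> \<mu> + e \<le> avg_update n \<rho> x w g
      \<and> (\<forall>f\<in>?V - G. avg_update n \<rho> x w g \<le> x f - \<rho> + 3*e)" if g: "g \<in> G" for g
  proof -
    have gV: "g \<in> ?V" using g GV by auto
    have wg: "\<forall>j\<in>?V. d \<le> w j g" "\<forall>j\<in>?V. w j g \<le> 3*d" using w gV by auto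
    have S: "?k * ?A = (\<Sum>j\<in>G. x j)" using k2 by simp
    have "?A + e \<le> avg_update n \<rho> x w g"
      using avg_update_ge[OF gV r0, of x ?A d w] NG[OF g] S wg by (simp add: e_def)
    moreover have "avg_update n \<rho> x w g \<le> ?A + 3*e"
      using avg_update_le[OF gV r0, of x ?A w "3*d"] NG[OF g] S wg by (simp add: e_def)
    moreover have "\<mu> + e \<le> avg_update n \<rho> x w g"
      using avg_update_ge[OF gV r0, of x \<mu> d w] NG[OF g] sum_bounded_below[of G \<mu> x] mu wg
      by (simp add: e_def)
    moreover have "avg_update n \<rho> x w g \<le> x f - \<rho> + 3*e" if f: "f \<in> ?V - G" for f
      using avg_update_le[OF gV r0, of x "x f - \<rho>" w "3*d"] NG[OF g]
        sum_bounded_above[of G x "x f - \<rho>"] above[OF f] wg by (fastforce simp: e_def)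
    ultimately show ?thesis by blast
  qed
  have tight: "\<forall>g\<in>G. \<forall>g'\<in>G. \<bar>x' g - x' g'\<bar> \<le> 3*d"
  proof (intro ballI)
    fix g g' assume g: "g \<in> G" and g': "g' \<in> G"
    have "\<bar>x' g - x' g'\<bar> \<le> \<bar>avg_update n \<rho> x w g - avg_update n \<rho> x w g'\<bar>"
      using x' g g' GV proj01_dist_le by (metis subsetD)
    also have "\<dots> \<le> 3*d" using bounds[OF g] bounds[OF g'] e d by (simp add: abs_le_iff)
    finally show "\<bar>x' g - x' g'\<bar> \<le> 3*d" .
  qed
  have "x' g + \<rho> - 4*d < x' f" if f: "f \<in> ?V - G" and g: "g \<in> G" for f g
  proof -
    have "avg_update n \<rho> x w g \<le> x f - \<rho> + 3*e" using bounds[OF g] f by blast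
    then have "avg_update n \<rho> x w g \<le> x f - \<rho> + 3*d" using e by linarith
    then have "x' g \<le> max 0 (x f - \<rho> + 3*d)"
      using x' g GV proj01_le_max[of "avg_update n \<rho> x w g"] by auto
    moreover have "0 \<le> x g" using cube g GV by (auto simp: in_cube_def)
    ultimately show ?thesis using fixed[OF f] above[OF f g] d by (simp add: max_def split: if_splits)
  qed
  moreover have "min 1 (\<mu> + d/2) \<le> x' g" if g: "g \<in> G" for g
    using x' g GV min_le_proj01[of "avg_update n \<rho> x w g"] bounds[OF g] e by force
  ultimately show ?thesis
    unfolding gathering_def using GV cG outside_apart fixed tight d by force
qed

lemma absorb_geometry:
  assumes d: "0 < d" "7*d \<le> \<rho>" and inv: "gathering n \<rho> d x G"
    and f1: "f1 \<in> {1..n} - G" and g0: "g0 \<in> G" and near: "\<bar>x f1 - x g0\<bar> \<le> \<rho>"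
  shows "\<forall>g\<in>G. \<bar>x g - x g0\<bar> \<le> 3*d"
    and "x g0 + \<rho> - 4*d < x f1"
    and "\<forall>f\<in>{1..n} - G - {f1}. x f1 + \<rho> < x f \<and> (\<forall>g\<in>G. x g + \<rho> < x f)"
proof -
  let ?V = "{1..n::nat}"
  have outside_above: "\<forall>f\<in>?V - G. \<forall>g\<in>G. x g + \<rho> - 4*d < x f"
    and outside_apart: "\<forall>f\<in>?V - G. \<forall>f'\<in>?V - G. f \<noteq> f' \<longrightarrow> \<rho> < \<bar>x f - x f'\<bar>"
    and tight_or_far: "(\<forall>g\<in>G. \<forall>g'\<in>G. \<bar>x g - x g'\<bar> \<le> 3*d) \<or> (\<forall>f\<in>?V - G. \<forall>g\<in>G. x g + \<rho> + 4*d < x f)"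
    using inv unfolding gathering_def by blast+
  have "\<not> x g0 + \<rho> + 4*d < x f1" using near d by linarith
  then show tight: "\<forall>g\<in>G. \<bar>x g - x g0\<bar> \<le> 3*d" using tight_or_far f1 g0 by blast
  show f1low: "x g0 + \<rho> - 4*d < x f1" using outside_above f1 g0 by blast
  show "\<forall>f\<in>?V - G - {f1}. x f1 + \<rho> < x f \<and> (\<forall>g\<in>G. x g + \<rho> < x f)"
  proof
    fix f assume f: "f \<in> ?V - G - {f1}"
    have ff1: "\<rho> < \<bar>x f - x f1\<bar>" using outside_apart f f1 by blast
    have above: "x g + \<rho> < x f" if g: "g \<in> G" for g
    proof (rule ccontr)
      assume "\<not> x g + \<rho> < x f"
      moreover have "\<bar>x g - x g0\<bar> \<le> 3*d" using tight g by blast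
      moreover have "x g0 + \<rho> - 4*d < x f" using outside_above f g0 by blast
      ultimately have "\<bar>x f - x f1\<bar> < 7*d" using near f1low by (simp add: abs_less_iff abs_le_iff)
      then show False using ff1 d by linarith
    qed
    then have "x f1 < x f" using g0 near by fastforce
    then show "x f1 + \<rho> < x f \<and> (\<forall>g\<in>G. x g + \<rho> < x f)" using ff1 above by auto
  qed
qed

lemma absorb_update_bounds:
  assumes r0: "0 \<le> \<rho>" and d: "0 < d" "7*d \<le> \<rho>" and inv: "gathering n \<rho> d x G"
    and f1: "f1 \<in> {1..n} - G" and g0: "g0 \<in> G" and near: "\<bar>x f1 - x g0\<bar> \<le> \<rho>"
    and w: "\<forall>i\<in>{1..n}. \<forall>j\<in>{1..n}. d \<le> w j i \<and> w j i \<le> 3*d"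
    and mu: "\<forall>g\<in>G. \<mu> \<le> x g" and i: "i \<in> insert f1 G"
  shows "x g0 - 3*d \<le> avg_update n \<rho> x w i \<and> \<mu> + d/2 \<le> avg_update n \<rho> x w i
    \<and> avg_update n \<rho> x w i \<le> (x g0 + 3*d + x f1)/2 + 3*d"
proof -
  let ?V = "{1..n::nat}"
  let ?N = "nbrs n (\<lambda>_. \<rho>) x i"
  let ?k = "real (card ?N)"
  have GV: "G \<subseteq> ?V" and cG: "2 \<le> card G" and cluster_close: "\<forall>g\<in>G. \<forall>g'\<in>G. \<bar>x g - x g'\<bar> \<le> \<rho>"
    using inv unfolding gathering_def by blast+
  note tight = absorb_geometry(1)[OF d inv f1 g0 near]
    and f1low = absorb_geometry(2)[OF d inv f1 g0 near]
    and far = absorb_geometry(3)[OF d inv f1 g0 near]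
  have iV: "i \<in> ?V" using i f1 GV by auto
  have wi: "\<forall>j\<in>?V. d \<le> w j i" "\<forall>j\<in>?V. w j i \<le> 3*d" using w iV by auto
  have N: "?N \<subseteq> insert f1 G"
  proof (rule nbrs_subsetI, intro ballI)
    fix j assume "j \<in> ?V - insert f1 G"
    then have "x i + \<rho> < x j" using far i by (cases "i = f1") auto
    then show "\<rho> < \<bar>x j - x i\<bar>" by linarith
  qed
  obtain j where j: "j \<in> G" "j \<noteq> i" "\<bar>x j - x i\<bar> \<le> \<rho>"
  proof (cases "i = f1")
    case True
    then show ?thesis using that[of g0] g0 f1 near by (auto simp: abs_minus_commute)
  next
    case False
    then have iG: "i \<in> G" using i by auto
    have "finite G" using GV finite_subset by blast
    then have "card (G - {i}) = card G - 1" using iG by simp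
    then have "G - {i} \<noteq> {}" using cG by (metis One_nat_def card.empty diff_is_0_eq not_less_eq_eq numeral_2_eq_2)
    then obtain g where "g \<in> G" "g \<noteq> i" by blast
    then show ?thesis using that cluster_close iG by blast
  qed
  have k2: "2 \<le> ?k" using two_le_card_nbrs[OF iV r0] j GV by fastforce
  have low: "\<mu> \<le> x j \<and> x g0 - 3*d \<le> x j" if "j \<in> ?N" for j
  proof (cases "j = f1")
    case True
    then show ?thesis using f1low g0 mu d by force
  next
    case False
    then have "j \<in> G" using N that by blast
    then show ?thesis using mu tight by (force simp: abs_le_iff)
  qed
  have "\<mu> + d * (?k - 1) / ?k \<le> avg_update n \<rho> x w i"
    using avg_update_ge[OF iV r0, of x \<mu> d w] sum_bounded_below[of ?N \<mu> x] low wi by simp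
  moreover have "x g0 - 3*d + d * (?k - 1) / ?k \<le> avg_update n \<rho> x w i"
    using avg_update_ge[OF iV r0, of x "x g0 - 3*d" d w] sum_bounded_below[of ?N "x g0 - 3*d" x] low wi
    by simp
  \<comment> \<open>only the newcomer \<open>f1\<close> can lie above the tight cluster\<close>
  moreover have "(\<Sum>j\<in>?N. x j) \<le> ?k * ((x g0 + 3*d + x f1) / 2)"
  proof (rule sum_le_with_one_outlier[OF finite_nbrs])
    have "?N - {f1} \<subseteq> G" using N by blast
    then show "\<forall>j\<in>?N - {f1}. x j \<le> x g0 + 3*d" using tight by (force simp: abs_le_iff)
    show "x g0 + 3*d \<le> x f1" using f1low d by linarith
    have "j \<in> ?N" "j \<noteq> f1" using j f1 GV by (auto simp: nbrs_def)
    then show "\<exists>j\<in>?N. j \<noteq> f1" by blast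
  qed
  then have "avg_update n \<rho> x w i \<le> (x g0 + 3*d + x f1) / 2 + 3*d * (?k - 1) / ?k"
    using avg_update_le[OF iV r0, of x _ w "3*d"] wi by simp
  moreover have "3*d * (?k - 1) / ?k \<le> 3*d" using scaled_frac_le k2 d by simp
  moreover have "d/2 \<le> d * (?k - 1) / ?k" using half_le_scaled_frac[OF k2] d by simp
  ultimately show ?thesis using d by linarith
qed

lemma gathering_step_absorb:
  assumes r0: "0 \<le> \<rho>" and d: "0 < d" "21*d \<le> \<rho>"
    and inv: "gathering n \<rho> d x G" and cube: "in_cube n x"
    and w: "\<forall>i\<in>{1..n}. \<forall>j\<in>{1..n}. d \<le> w j i \<and> w j i \<le> 3*d"
    and x': "\<forall>i\<in>{1..n}. x' i = proj01 (avg_update n \<rho> x w i)"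
    and mu: "\<forall>g\<in>G. \<mu> \<le> x g"
    and f1: "f1 \<in> {1..n} - G" and g0: "g0 \<in> G" and near: "\<bar>x f1 - x g0\<bar> \<le> \<rho>"
  shows "gathering n \<rho> d x' (insert f1 G) \<and> (\<forall>g\<in>insert f1 G. min 1 (\<mu> + d/2) \<le> x' g)"
proof -
  let ?V = "{1..n::nat}"
  let ?G' = "insert f1 G"
  let ?U = "(x g0 + 3*d + x f1)/2 + 3*d"
  have d7: "7*d \<le> \<rho>" using d by linarith
  have GV: "G \<subseteq> ?V" and cG: "2 \<le> card G"
    and outside_apart: "\<forall>f\<in>?V - G. \<forall>f'\<in>?V - G. f \<noteq> f' \<longrightarrow> \<rho> < \<bar>x f - x f'\<bar>"
    using inv unfolding gathering_def by blast+
  note f1low = absorb_geometry(2)[OF d(1) d7 inv f1 g0 near]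
    and far = absorb_geometry(3)[OF d(1) d7 inv f1 g0 near]
  note bounds = absorb_update_bounds[OF r0 d(1) d7 inv f1 g0 near w mu]
  have G'V: "?G' \<subseteq> ?V" using GV f1 by blast
  have fixed: "x' f = x f" if f: "f \<in> ?V - ?G'" for f
  proof -
    have "\<rho> < \<bar>x j - x f\<bar>" if j: "j \<in> ?V" "j \<noteq> f" for j
    proof (cases "j \<in> ?G'")
      case True
      then have "x j + \<rho> < x f" using far f by auto
      then show ?thesis by linarith
    next
      case False
      then show ?thesis using outside_apart f j by blast
    qed
    then have "isolated n \<rho> x f" unfolding isolated_def by blast
    then show ?thesis using x' f isolated_update_fixed[OF _ r0 cube] by auto
  qed
  have far': "x' i + \<rho> + 4*d < x' f" if f: "f \<in> ?V - ?G'" and i: "i \<in> ?G'" for f i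
  proof -
    have "x' i \<le> max 0 (avg_update n \<rho> x w i)" using x' i G'V proj01_le_max by auto
    then have "x' i \<le> max 0 ?U" using bounds[OF i] by auto
    moreover have "x f1 + \<rho> < x f" using far f by blast
    moreover have "0 \<le> x g0" using cube g0 GV by (auto simp: in_cube_def)
    moreover have "x g0 + 17*d < x f1" using f1low d by linarith
    then have "4*d < x f1" "?U + 4*d < x f1" using d \<open>0 \<le> x g0\<close> by (simp_all add: field_simps)
    ultimately show ?thesis using fixed[OF f] by (simp add: max_def split: if_splits)
  qed
  have close: "\<bar>x' g - x' g'\<bar> \<le> \<rho>" if g: "g \<in> ?G'" and g': "g' \<in> ?G'" for g g'
  proof -
    have "\<bar>x' g - x' g'\<bar> \<le> \<bar>avg_update n \<rho> x w g - avg_update n \<rho> x w g'\<bar>"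
      using x' g g' G'V proj01_dist_le by (metis subsetD)
    also have "\<dots> \<le> \<rho>"
    proof -
      have "x g0 - 3*d \<le> avg_update n \<rho> x w g" "avg_update n \<rho> x w g \<le> ?U"
        "x g0 - 3*d \<le> avg_update n \<rho> x w g'" "avg_update n \<rho> x w g' \<le> ?U"
        using bounds[OF g] bounds[OF g'] by blast+
      moreover have "x f1 - x g0 \<le> \<rho>" using near by linarith
      ultimately show ?thesis using d unfolding abs_le_iff by (simp add: field_simps)
    qed
    finally show ?thesis .
  qed
  have "gathering n \<rho> d x' ?G'"
    unfolding gathering_def
  proof (intro conjI)
    show "?G' \<subseteq> ?V" by (fact G'V)
    show "2 \<le> card ?G'" using cG card_insert_le[of G f1] by linarith
    show "\<forall>f\<in>?V - ?G'. \<forall>g\<in>?G'. x' g + \<rho> - 4*d < x' f" using far' d by force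
    show "\<forall>f\<in>?V - ?G'. \<forall>f'\<in>?V - ?G'. f \<noteq> f' \<longrightarrow> \<rho> < \<bar>x' f - x' f'\<bar>" using outside_apart fixed by simp
    show "\<forall>g\<in>?G'. \<forall>g'\<in>?G'. \<bar>x' g - x' g'\<bar> \<le> \<rho>" using close by blast
    show "(\<forall>g\<in>?G'. \<forall>g'\<in>?G'. \<bar>x' g - x' g'\<bar> \<le> 3*d) \<or> (\<forall>f\<in>?V - ?G'. \<forall>g\<in>?G'. x' g + \<rho> + 4*d < x' f)"
      using far' by blast
  qed
  moreover have "min 1 (\<mu> + d/2) \<le> x' g" if g: "g \<in> ?G'" for g
    using x' g G'V min_le_proj01[of "avg_update n \<rho> x w g"] bounds[OF g] by force
  ultimately show ?thesis by blast
qed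

lemma gathering_step:
  assumes r0: "0 \<le> \<rho>" and d: "0 < d" "21*d \<le> \<rho>"
    and inv: "gathering n \<rho> d x G" and cube: "in_cube n x"
    and w: "\<forall>i\<in>{1..n}. \<forall>j\<in>{1..n}. d \<le> w j i \<and> w j i \<le> 3*d"
    and x': "\<forall>i\<in>{1..n}. x' i = proj01 (avg_update n \<rho> x w i)"
    and mu: "\<forall>g\<in>G. \<mu> \<le> x g"
  shows "\<exists>G'. gathering n \<rho> d x' G' \<and> (\<forall>g\<in>G'. min 1 (\<mu> + d/2) \<le> x' g)"
proof (cases "\<forall>f\<in>{1..n} - G. \<forall>g\<in>G. \<rho> < \<bar>x f - x g\<bar>")
  case True
  have "3*d \<le> \<rho>" using d by linarith
  then show ?thesis using gathering_step_detached[OF r0 d(1) _ inv cube w x' mu True] by blast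
next
  case False
  then obtain f1 g0 where "f1 \<in> {1..n} - G" "g0 \<in> G" "\<bar>x f1 - x g0\<bar> \<le> \<rho>"
    by (meson not_less)
  then show ?thesis using gathering_step_absorb[OF r0 d inv cube w x' mu] by blast
qed

section \<open>Phases of a trajectory\<close>

lemma descent_phase:
  assumes n2: "2 \<le> n" and rr: "1 / real (n - 1) \<le> \<rho>" and d: "0 < d" "d \<le> \<rho>"
    and cube: "\<And>t. in_cube n (X t)"
    and step: "\<And>t. t < T \<Longrightarrow> \<forall>i\<in>{1..n}. X (Suc t) i = proj01 (avg_update n \<rho> (X t) (W t) i)"
    and down: "\<And>t. t < T \<Longrightarrow> \<forall>i\<in>{1..n}. \<forall>j\<in>{1..n}. W t j i \<le> -d"
    and T: "1 \<le> real T * d / 2"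
  shows "\<exists>G. gathering n \<rho> d (X T) G"
proof -
  let ?V = "{1..n::nat}"
  have r0: "0 \<le> \<rho>" using d by linarith
  have sweep: "\<forall>r\<in>?V - top_isolated n \<rho> (X t). X t r \<le> max 0 (1 - real t * d / 2)" if "t \<le> T" for t
    using that
  proof (induction t)
    case 0
    then show ?case using cube[of 0] by (auto simp: in_cube_def)
  next
    case (Suc t)
    then have t: "t < T" "t \<le> T" by auto
    have sub: "top_isolated n \<rho> (X t) \<subseteq> top_isolated n \<rho> (X (Suc t))"
      by (rule top_isolated_mono[OF n2 rr r0 d cube down[OF t(1)] step[OF t(1)]])
    show ?case
    proof
      fix r assume "r \<in> ?V - top_isolated n \<rho> (X (Suc t))"
      then have "r \<in> ?V - top_isolated n \<rho> (X t)" using sub by blast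
      then have "X (Suc t) r \<le> max 0 (max 0 (1 - real t * d / 2) - d/2)"
        by (rule descent_step_bound[OF r0 d cube down[OF t(1)] step[OF t(1)] Suc.IH[OF t(2)]])
      also have "\<dots> \<le> max 0 (1 - real (Suc t) * d / 2)" using d by (auto simp: algebra_simps max_def)
      finally show "X (Suc t) r \<le> max 0 (1 - real (Suc t) * d / 2)" .
    qed
  qed
  let ?G = "?V - top_isolated n \<rho> (X T)"
  have zero: "X T g = 0" if g: "g \<in> ?G" for g
  proof -
    have "X T g \<le> max 0 (1 - real T * d / 2)" using sweep[of T] g by blast
    moreover have "0 \<le> X T g" using cube[of T] g by (simp add: in_cube_def)
    ultimately show ?thesis using T by simp
  qed
  have "gathering n \<rho> d (X T) ?G"
    unfolding gathering_def
  proof (intro conjI)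
    show "?G \<subseteq> ?V" by blast
    obtain i j where "i \<in> ?G" "j \<in> ?G" "i \<noteq> j" using two_not_top_isolated[OF n2 rr cube] by blast
    then have "card {i, j} \<le> card ?G" by (intro card_mono) auto
    then show "2 \<le> card ?G" using \<open>i \<noteq> j\<close> by simp
    have "?V - ?G = top_isolated n \<rho> (X T)" by (auto simp: top_isolated_def)
    then show "\<forall>f\<in>?V - ?G. \<forall>g\<in>?G. X T g + \<rho> - 4*d < X T f"
      and "\<forall>f\<in>?V - ?G. \<forall>f'\<in>?V - ?G. f \<noteq> f' \<longrightarrow> \<rho> < \<bar>X T f - X T f'\<bar>"
      using below_top_isolated[of _ n \<rho> "X T"] top_isolated_isolated[of _ n \<rho> "X T"] d
      by (fastforce simp: isolated_def)+
    show "\<forall>g\<in>?G. \<forall>g'\<in>?G. \<bar>X T g - X T g'\<bar> \<le> \<rho>" using zero r0 by simp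
    show "(\<forall>g\<in>?G. \<forall>g'\<in>?G. \<bar>X T g - X T g'\<bar> \<le> 3*d)
        \<or> (\<forall>f\<in>?V - ?G. \<forall>g\<in>?G. X T g + \<rho> + 4*d < X T f)" using zero d by simp
  qed
  then show ?thesis by blast
qed

lemma gathering_phase:
  assumes r0: "0 \<le> \<rho>" and d: "0 < d" "21*d \<le> \<rho>"
    and cube: "\<And>t. in_cube n (X t)"
    and step: "\<And>t. t < T \<Longrightarrow> \<forall>i\<in>{1..n}. X (Suc t) i = proj01 (avg_update n \<rho> (X t) (W t) i)"
    and up: "\<And>t. t < T \<Longrightarrow> \<not> all_adjacent n \<rho> (X t)
               \<Longrightarrow> \<forall>i\<in>{1..n}. \<forall>j\<in>{1..n}. d \<le> W t j i \<and> W t j i \<le> 3*d"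
    and G: "gathering n \<rho> d (X 0) G" and T: "1 \<le> real T * d / 2"
  shows "\<exists>t\<le>T. all_adjacent n \<rho> (X t)"
proof -
  have rise: "(\<exists>t\<le>k. all_adjacent n \<rho> (X t))
      \<or> (\<exists>G. gathering n \<rho> d (X k) G \<and> (\<forall>g\<in>G. min 1 (real k * d / 2) \<le> X k g))" if "k \<le> T" for k
    using that
  proof (induction k)
    case 0
    have "\<forall>g\<in>G. min 1 (real 0 * d / 2) \<le> X 0 g"
      using G cube[of 0] by (auto simp: gathering_def in_cube_def)
    then show ?case using G by blast
  next
    case (Suc k)
    show ?case
    proof (cases "\<exists>t\<le>k. all_adjacent n \<rho> (X t)")
      case True
      then show ?thesis using le_SucI by blast
    next
      case False
      then obtain G where G: "gathering n \<rho> d (X k) G" "\<forall>g\<in>G. min 1 (real k * d / 2) \<le> X k g"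
        using Suc by auto
      have "k < T" "\<not> all_adjacent n \<rho> (X k)" using Suc.prems False by auto
      then obtain G' where "gathering n \<rho> d (X (Suc k)) G'"
          "\<forall>g\<in>G'. min 1 (min 1 (real k * d / 2) + d/2) \<le> X (Suc k) g"
        using gathering_step[OF r0 d G(1) cube up step G(2)] by blast
      moreover have "min 1 (real (Suc k) * d / 2) \<le> min 1 (min 1 (real k * d / 2) + d/2)"
        using d by (simp add: algebra_simps min_def)
      ultimately show ?thesis by force
    qed
  qed
  show ?thesis
  proof (rule ccontr)
    assume none: "\<not> ?thesis"
    then obtain G where G: "gathering n \<rho> d (X T) G" "\<forall>g\<in>G. 1 \<le> X T g"
      using rise[of T] T by auto
    have "G \<noteq> {1..n}" using G(1) none unfolding gathering_def all_adjacent_def by blast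
    then obtain f where f: "f \<in> {1..n} - G" using G(1) unfolding gathering_def by blast
    obtain g where g: "g \<in> G" using G(1) unfolding gathering_def by fastforce
    have "X T g + \<rho> - 4*d < X T f" using G(1) f g unfolding gathering_def by blast
    moreover have "X T f \<le> 1" using cube[of T] f by (simp add: in_cube_def)
    ultimately show False using G(2) g d by fastforce
  qed
qed

definition mean :: "nat \<Rightarrow> (nat \<Rightarrow> real) \<Rightarrow> real" where
  "mean n x = (\<Sum>i\<in>{1..n}. x i) / real n"

lemma mean_between:
  assumes "1 \<le> n" "\<forall>i\<in>{1..n}. a \<le> y i \<and> y i \<le> b"
  shows "a \<le> mean n y \<and> mean n y \<le> b"
proof -
  have "(\<Sum>i\<in>{1..n}. y i) \<le> real n * b" "real n * a \<le> (\<Sum>i\<in>{1..n}. y i)"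
    using sum_bounded_above[of "{1..n}" y b] sum_bounded_below[of "{1..n}" a y] assms(2) by auto
  then show ?thesis unfolding mean_def using assms(1) by (simp add: divide_le_eq le_divide_eq mult.commute)
qed

lemma mean_in_unit: "1 \<le> n \<Longrightarrow> in_cube n x \<Longrightarrow> 0 \<le> mean n x \<and> mean n x \<le> 1"
  using mean_between[of n 0 x 1] by (simp add: in_cube_def)

lemma all_adjacent_avg_update:
  assumes n1: "1 \<le> n" and r0: "0 \<le> \<rho>" and adj: "all_adjacent n \<rho> x" and i: "i \<in> {1..n}"
    and w: "\<forall>j\<in>{1..n}. lo \<le> w j i \<and> w j i \<le> hi"
  shows "mean n x + lo * (real n - 1) / real n \<le> avg_update n \<rho> x w i
    \<and> avg_update n \<rho> x w i \<le> mean n x + hi * (real n - 1) / real n"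
proof -
  have N: "nbrs n (\<lambda>_. \<rho>) x i = {1..n}"
    using adj i by (intro nbrs_eqI) (auto simp: all_adjacent_def)
  have S: "real n * mean n x = (\<Sum>j\<in>{1..n}. x j)" unfolding mean_def using n1 by simp
  show ?thesis
    using avg_update_ge[OF i r0, of x "mean n x" lo w] avg_update_le[OF i r0, of x "mean n x" w hi] N S w
    by simp
qed

lemma all_adjacent_drift:
  assumes n1: "1 \<le> n" and r0: "0 \<le> \<rho>" and adj: "all_adjacent n \<rho> x"
    and w: "\<forall>i\<in>{1..n}. \<forall>j\<in>{1..n}. lo \<le> w j i \<and> w j i \<le> hi"
    and ab: "a \<le> lo * (real n - 1) / real n" "hi * (real n - 1) / real n \<le> b" "b - a \<le> \<rho>"
    and unit: "0 \<le> mean n x + a" "mean n x + b \<le> 1"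
    and x': "\<forall>i\<in>{1..n}. x' i = proj01 (avg_update n \<rho> x w i)"
  shows "all_adjacent n \<rho> x' \<and> mean n x + a \<le> mean n x' \<and> mean n x' \<le> mean n x + b"
proof -
  have bounds: "\<forall>i\<in>{1..n}. mean n x + a \<le> x' i \<and> x' i \<le> mean n x + b"
  proof
    fix i assume i: "i \<in> {1..n}"
    then have "mean n x + a \<le> avg_update n \<rho> x w i \<and> avg_update n \<rho> x w i \<le> mean n x + b"
      using all_adjacent_avg_update[OF n1 r0 adj i, of lo w hi] w ab by fastforce
    then show "mean n x + a \<le> x' i \<and> x' i \<le> mean n x + b" using x' i unit proj01_id by auto
  qed
  have "all_adjacent n \<rho> x'"
    unfolding all_adjacent_def
  proof (intro ballI)
    fix i j assume "i \<in> {1..n}" "j \<in> {1..n}"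
    then have "mean n x + a \<le> x' i" "x' i \<le> mean n x + b" "mean n x + a \<le> x' j" "x' j \<le> mean n x + b"
      using bounds by blast+
    then show "\<bar>x' i - x' j\<bar> \<le> \<rho>" using ab(3) by (simp add: abs_le_iff)
  qed
  then show ?thesis using mean_between[OF n1 bounds] by simp
qed

lemma in_E'_setI:
  assumes "in_cube n x" "1 \<le> n"
    and "\<forall>i\<in>{1..n}. \<forall>j\<in>{1..n}. \<bar>x i - x j\<bar> \<le> c"
    and "i0 \<in> {1..n}" "j0 \<in> {1..n}" "c - \<epsilon> \<le> \<bar>x i0 - x j0\<bar>"
  shows "x \<in> E'_set n c \<epsilon>"
proof -
  let ?S = "{\<bar>x i - x j\<bar> | i j. i \<in> {1..n} \<and> j \<in> {1..n}}"
  have "?S = (\<lambda>(i, j). \<bar>x i - x j\<bar>) ` ({1..n} \<times> {1..n})" by auto blast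
  then have fin: "finite ?S" by simp
  have mem: "\<bar>x i0 - x j0\<bar> \<in> ?S" using assms(4,5) by blast
  have "Max ?S \<le> c" using assms(3) fin mem by (subst Max_le_iff) auto
  moreover have "c - \<epsilon> \<le> Max ?S" using Max_ge[OF fin mem] assms(6) by linarith
  ultimately show ?thesis using assms(1) unfolding E'_set_def by blast
qed

lemma centering_phase:
  assumes n2: "2 \<le> n" and r0: "0 \<le> \<rho>" and d: "0 < d" "3*d \<le> \<rho>" and c: "0 \<le> c" "c + 6*d \<le> 1"
    and cube: "\<And>t. in_cube n (X t)"
    and step: "\<And>t. t < T \<Longrightarrow> \<forall>i\<in>{1..n}. X (Suc t) i = proj01 (avg_update n \<rho> (X t) (W t) i)"
    and up: "\<And>t. t < T \<Longrightarrow> all_adjacent n \<rho> (X t) \<Longrightarrow> mean n (X t) < c/2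
               \<Longrightarrow> \<forall>i\<in>{1..n}. \<forall>j\<in>{1..n}. d \<le> W t j i \<and> W t j i \<le> 3*d"
    and down: "\<And>t. t < T \<Longrightarrow> all_adjacent n \<rho> (X t) \<Longrightarrow> 1 - c/2 < mean n (X t)
               \<Longrightarrow> \<forall>i\<in>{1..n}. \<forall>j\<in>{1..n}. -3*d \<le> W t j i \<and> W t j i \<le> -d"
    and start: "all_adjacent n \<rho> (X 0)" and T: "1 \<le> real T * d / 2"
  shows "\<exists>t\<le>T. all_adjacent n \<rho> (X t) \<and> c/2 \<le> mean n (X t) \<and> mean n (X t) \<le> 1 - c/2"
    (is "\<exists>t\<le>T. ?good t")
proof -
  have n1: "1 \<le> n" using n2 by simp
  have k2: "2 \<le> real n" using n2 by simp
  have frac: "d/2 \<le> d * (real n - 1) / real n" "3*d * (real n - 1) / real n \<le> 3*d"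
    using half_le_scaled_frac[OF k2] scaled_frac_le[of "real n" "3*d"] k2 d by auto
  have approach: "(\<exists>t\<le>k. ?good t) \<or> (all_adjacent n \<rho> (X k)
      \<and> c/2 - mean n (X k) \<le> 1 - real k * d / 2 \<and> mean n (X k) - (1 - c/2) \<le> 1 - real k * d / 2)"
    if "k \<le> T" for k
    using that
  proof (induction k)
    case 0
    then show ?case using start mean_in_unit[OF n1 cube[of 0]] c d by auto
  next
    case (Suc k)
    let ?m = "mean n (X k)" and ?m' = "mean n (X (Suc k))"
    show ?case
    proof (cases "\<exists>t\<le>k. ?good t")
      case True
      then show ?thesis using le_SucI by blast
    next
      case False
      then have adj: "all_adjacent n \<rho> (X k)"
        and gap: "c/2 - ?m \<le> 1 - real k * d / 2" "?m - (1 - c/2) \<le> 1 - real k * d / 2"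
        using Suc by auto
      have "\<not> ?good k" using False by blast
      then have out: "?m < c/2 \<or> 1 - c/2 < ?m" using adj by linarith
      have k: "k < T" using Suc.prems by simp
      have m: "0 \<le> ?m" "?m \<le> 1" using mean_in_unit[OF n1 cube] by auto
      consider (low) "?m < c/2" | (high) "1 - c/2 < ?m" using out by blast
      then have "all_adjacent n \<rho> (X (Suc k)) \<and> (?good (Suc k)
          \<or> (c/2 - ?m' \<le> c/2 - ?m - d/2 \<and> ?m' < c/2)
          \<or> (?m' - (1 - c/2) \<le> ?m - (1 - c/2) - d/2 \<and> 1 - c/2 < ?m'))"
      proof cases
        case low
        have "all_adjacent n \<rho> (X (Suc k)) \<and> ?m + d/2 \<le> ?m' \<and> ?m' \<le> ?m + 3*d"
          by (rule all_adjacent_drift[OF n1 r0 adj up[OF k adj low] _ _ _ _ _ step[OF k]])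
            (use frac d c m low in linarith)+
        then show ?thesis using low c by auto
      next
        case high
        have "all_adjacent n \<rho> (X (Suc k)) \<and> ?m + -(3*d) \<le> ?m' \<and> ?m' \<le> ?m + -(d/2)"
          by (rule all_adjacent_drift[OF n1 r0 adj down[OF k adj high] _ _ _ _ _ step[OF k]])
            (use frac d c m high in \<open>simp_all add: minus_divide_left[symmetric]\<close>)
        then show ?thesis using high c by auto
      qed
      then consider "?good (Suc k)"
        | "all_adjacent n \<rho> (X (Suc k))" "c/2 - ?m' \<le> c/2 - ?m - d/2" "?m' < c/2"
        | "all_adjacent n \<rho> (X (Suc k))" "?m' - (1 - c/2) \<le> ?m - (1 - c/2) - d/2" "1 - c/2 < ?m'"
        by blast
      moreover have "real (Suc k) * d / 2 = real k * d / 2 + d/2" by (simp add: algebra_simps)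
      ultimately show ?thesis using gap c d by cases (blast, (intro disjI2 conjI; (blast | linarith))+)
    qed
  qed
  show ?thesis using approach[of T] T by auto
qed

lemma spreading_step:
  assumes n3: "3 \<le> n" and r0: "0 \<le> \<rho>" and adj: "all_adjacent n \<rho> x"
    and c: "c = 2 * \<eta> * real (n - 1) / real n" and cen: "c/2 \<le> mean n x" "mean n x \<le> 1 - c/2"
    and d: "0 \<le> d" "4*d \<le> \<epsilon>"
    and w: "\<forall>i\<in>{1..n}. \<forall>j\<in>{1..n}. -\<eta> \<le> w j i \<and> w j i \<le> \<eta>"
    and w1: "\<forall>j\<in>{1..n}. \<eta> - 2*d \<le> w j 1" and w2: "\<forall>j\<in>{1..n}. w j 2 \<le> -\<eta> + 2*d"
    and x': "\<forall>i\<in>{1..n}. x' i = proj01 (avg_update n \<rho> x w i)"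
  shows "x' \<in> E'_set n c \<epsilon>"
proof -
  let ?m = "mean n x"
  have n1: "1 \<le> n" using n3 by simp
  have half: "\<eta> * (real n - 1) / real n = c/2" using c n3 by (simp add: of_nat_diff)
  have h: "2*d * (real n - 1) / real n \<le> 2*d" using scaled_frac_le[of "real n" "2*d"] n1 d by simp
  have avg: "?m - c/2 \<le> avg_update n \<rho> x w i \<and> avg_update n \<rho> x w i \<le> ?m + c/2" if i: "i \<in> {1..n}" for i
    using all_adjacent_avg_update[OF n1 r0 adj i, of "-\<eta>" w \<eta>] w i half by simp
  have x'_eq: "x' i = avg_update n \<rho> x w i" if i: "i \<in> {1..n}" for i
    using avg[OF i] x' i cen proj01_id by auto
  have V: "(1::nat) \<in> {1..n}" "(2::nat) \<in> {1..n}" using n3 by auto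
  have "?m + (\<eta> - 2*d) * (real n - 1) / real n \<le> avg_update n \<rho> x w 1"
    using all_adjacent_avg_update[OF n1 r0 adj V(1), of "\<eta> - 2*d" w \<eta>] w w1 V by blast
  then have x1: "?m + c/2 - 2*d \<le> x' 1"
    using x'_eq[OF V(1)] half h by (simp add: left_diff_distrib diff_divide_distrib)
  have "avg_update n \<rho> x w 2 \<le> ?m + (-\<eta> + 2*d) * (real n - 1) / real n"
    using all_adjacent_avg_update[OF n1 r0 adj V(2), of "-\<eta>" w "-\<eta> + 2*d"] w w2 V by blast
  moreover have "(-\<eta> + 2*d) * (real n - 1) / real n = 2*d * (real n - 1) / real n - \<eta> * (real n - 1) / real n"
    by (simp add: add_divide_distrib diff_divide_distrib algebra_simps)
  ultimately have x2: "x' 2 \<le> ?m - c/2 + 2*d" using x'_eq[OF V(2)] half h by linarith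
  show ?thesis
  proof (rule in_E'_setI[OF _ n1 _ V])
    show "in_cube n x'" using x' proj01_in_unit by (simp add: in_cube_def)
    show "\<forall>i\<in>{1..n}. \<forall>j\<in>{1..n}. \<bar>x' i - x' j\<bar> \<le> c"
    proof (intro ballI)
      fix i j assume i: "i \<in> {1..n}" and j: "j \<in> {1..n}"
      show "\<bar>x' i - x' j\<bar> \<le> c"
        using avg[OF i] avg[OF j] x'_eq[OF i] x'_eq[OF j] by (simp add: abs_le_iff)
    qed
    show "c - \<epsilon> \<le> \<bar>x' 1 - x' 2\<bar>" using x1 x2 d by linarith
  qed
qed

section \<open>The controller\<close>

definition controller :: "nat \<Rightarrow> real \<Rightarrow> real \<Rightarrow> real \<Rightarrow> real \<Rightarrow> nat \<Rightarrow> nat \<Rightarrow> (nat \<Rightarrow> real) \<Rightarrow> nat \<Rightarrow> nat \<Rightarrow> real" where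
  "controller n \<rho> \<eta> c d M t x j i =
    (if t < M then -2*d
     else if \<not> all_adjacent n \<rho> x \<or> mean n x < c/2 then 2*d
     else if 1 - c/2 < mean n x then -2*d
     else if i = 1 then \<eta> - d else if i = 2 then -(\<eta> - d) else 0)"

lemma controller_bounded: "0 < d \<Longrightarrow> 3*d \<le> \<eta> \<Longrightarrow> \<bar>controller n \<rho> \<eta> c d M t x j i\<bar> \<le> \<eta> - d"
  by (simp add: controller_def)

lemma hist_C4_length: "length (hist_C4 n r us b x0 t) = Suc t"
  by (induction t) simp_all

lemma controlled_trajectory_reaches:
  fixes n M :: nat and \<rho> \<eta> \<epsilon> c d :: real
  assumes n3: "3 \<le> n" and rr: "1 / real (n - 1) \<le> \<rho>"
    and d: "0 < d" "3*d \<le> \<eta>" "4*d \<le> \<epsilon>" "6*d \<le> 1 - \<rho>" "21*d \<le> \<rho>"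
    and c: "c = 2 * \<eta> * real (n - 1) / real n" "c \<le> \<rho>"
    and M: "1 \<le> real M * d / 2"
    and x0: "in_cube n x0"
    and b: "\<forall>t<3*M+1. \<forall>i\<in>{1..n}. \<forall>j\<in>{1..n}. \<bar>b t j i\<bar> \<le> d"
    and us: "us = (\<lambda>h. controller n \<rho> \<eta> c d M (length h - 1) (last h))"
  shows "\<exists>t\<in>{1..3*M+1}. last (hist_C4 n (\<lambda>_. \<rho>) us b x0 t) \<in> E'_set n c \<epsilon>"
proof -
  let ?V = "{1..n::nat}"
  define X where "X t = last (hist_C4 n (\<lambda>_. \<rho>) us b x0 t)" for t
  define W where "W t = (\<lambda>j i. controller n \<rho> \<eta> c d M t (X t) j i + b t j i)" for t
  have r0: "0 \<le> \<rho>" using d by linarith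
  have step: "\<forall>i\<in>?V. X (Suc t) i = proj01 (avg_update n \<rho> (X t) (W t) i)" for t
    using step_C4_eq_avg_update[OF _ r0]
    by (simp add: X_def W_def us hist_C4_length)
  have cube: "in_cube n (X t)" for t
  proof (cases t)
    case 0
    then show ?thesis using x0 by (simp add: X_def)
  next
    case (Suc s)
    then show ?thesis using step[of s] proj01_in_unit by (simp add: in_cube_def)
  qed
  have W: "\<bar>W t j i - controller n \<rho> \<eta> c d M t (X t) j i\<bar> \<le> d"
    if "t < 3*M+1" "i \<in> ?V" "j \<in> ?V" for t i j
    using b that by (simp add: W_def)
  have n2: "2 \<le> n" and d\<rho>: "d \<le> \<rho>" using n3 d by linarith+
  have down: "\<forall>i\<in>?V. \<forall>j\<in>?V. W t j i \<le> -d" if t: "t < M" for t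
  proof (intro ballI)
    fix i j assume "i \<in> ?V" "j \<in> ?V"
    moreover have "controller n \<rho> \<eta> c d M t (X t) j i = -2*d" using t by (simp add: controller_def)
    ultimately show "W t j i \<le> -d" using W[of t i j] t by (simp add: abs_le_iff)
  qed
  obtain G where G: "gathering n \<rho> d (X M) G"
    using descent_phase[where X=X and T=M and W=W, OF n2 rr d(1) d\<rho> cube step down M] by blast
  have up: "\<forall>i\<in>?V. \<forall>j\<in>?V. d \<le> W (M + k) j i \<and> W (M + k) j i \<le> 3*d"
    if k: "k < M" "\<not> all_adjacent n \<rho> (X (M + k))" for k
  proof (intro ballI)
    fix i j assume "i \<in> ?V" "j \<in> ?V"
    moreover have "controller n \<rho> \<eta> c d M (M + k) (X (M + k)) j i = 2*d" using k by (simp add: controller_def)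
    ultimately show "d \<le> W (M + k) j i \<and> W (M + k) j i \<le> 3*d" using W[of "M + k" i j] k by (simp add: abs_le_iff)
  qed
  have "\<exists>s\<le>M. all_adjacent n \<rho> (X (M + s))"
    by (rule gathering_phase[where X="\<lambda>k. X (M + k)" and W="\<lambda>k. W (M + k)"])
      (use r0 d cube step up G M in simp_all)
  then obtain s where s: "s \<le> M" "all_adjacent n \<rho> (X (M + s))" by blast
  define t2 where "t2 = M + s"
  have ctl: "controller n \<rho> \<eta> c d M (t2 + k) x j i =
      (if \<not> all_adjacent n \<rho> x \<or> mean n x < c/2 then 2*d else if 1 - c/2 < mean n x then -2*d
       else if i = 1 then \<eta> - d else if i = 2 then -(\<eta> - d) else 0)" for k x j i
    by (simp add: controller_def t2_def)
  have Wt2: "\<bar>W (t2 + k) j i - controller n \<rho> \<eta> c d M (t2 + k) (X (t2 + k)) j i\<bar> \<le> d"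
    if "k \<le> M" "i \<in> ?V" "j \<in> ?V" for k i j
    using W[of "t2 + k" i j] that s(1) by (simp add: t2_def)
  have c': "0 \<le> c" "c + 6*d \<le> 1" using c d n3 by simp_all
  have "\<exists>k\<le>M. all_adjacent n \<rho> (X (t2 + k)) \<and> c/2 \<le> mean n (X (t2 + k)) \<and> mean n (X (t2 + k)) \<le> 1 - c/2"
  proof (rule centering_phase[where X="\<lambda>k. X (t2 + k)" and W="\<lambda>k. W (t2 + k)"])
    fix k assume k: "k < M" "all_adjacent n \<rho> (X (t2 + k))"
    show "\<forall>i\<in>?V. \<forall>j\<in>?V. d \<le> W (t2 + k) j i \<and> W (t2 + k) j i \<le> 3*d" if "mean n (X (t2 + k)) < c/2"
    proof (intro ballI)
      fix i j assume "i \<in> ?V" "j \<in> ?V"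
      then show "d \<le> W (t2 + k) j i \<and> W (t2 + k) j i \<le> 3*d"
        using Wt2[of k i j] k that by (simp add: ctl abs_le_iff)
    qed
    show "\<forall>i\<in>?V. \<forall>j\<in>?V. -3*d \<le> W (t2 + k) j i \<and> W (t2 + k) j i \<le> -d" if "1 - c/2 < mean n (X (t2 + k))"
    proof (intro ballI)
      fix i j assume "i \<in> ?V" "j \<in> ?V"
      moreover have "\<not> mean n (X (t2 + k)) < c/2" using that c' d by linarith
      ultimately show "-3*d \<le> W (t2 + k) j i \<and> W (t2 + k) j i \<le> -d"
        using Wt2[of k i j] k that by (simp add: ctl abs_le_iff)
    qed
  qed (use n3 r0 d c' cube step s M in \<open>simp_all add: t2_def\<close>)
  then obtain k where k: "k \<le> M" "all_adjacent n \<rho> (X (t2 + k))"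
    "c/2 \<le> mean n (X (t2 + k))" "mean n (X (t2 + k)) \<le> 1 - c/2" by blast
  let ?t3 = "t2 + k"
  have ctl3: "controller n \<rho> \<eta> c d M ?t3 (X ?t3) j i = (if i = 1 then \<eta> - d else if i = 2 then -(\<eta> - d) else 0)"
    for j i using k ctl by simp
  have "X (Suc ?t3) \<in> E'_set n c \<epsilon>"
  proof (rule spreading_step[OF n3 r0 k(2) c(1) k(3,4) _ d(3) _ _ _ step])
    show "\<forall>i\<in>?V. \<forall>j\<in>?V. -\<eta> \<le> W ?t3 j i \<and> W ?t3 j i \<le> \<eta>"
    proof (intro ballI)
      fix i j assume "i \<in> ?V" "j \<in> ?V"
      then show "-\<eta> \<le> W ?t3 j i \<and> W ?t3 j i \<le> \<eta>"
        using Wt2[OF k(1), of i j] controller_bounded[OF d(1,2), of n \<rho> c M ?t3 "X ?t3" j i]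
        by (simp add: abs_le_iff)
    qed
    have V: "1 \<in> ?V" "2 \<in> ?V" using n3 by auto
    show "\<forall>j\<in>?V. \<eta> - 2*d \<le> W ?t3 j 1" and "\<forall>j\<in>?V. W ?t3 j 2 \<le> -\<eta> + 2*d"
      using Wt2[OF k(1) V(1)] Wt2[OF k(1) V(2)] by (fastforce simp: ctl3 abs_le_iff)+
  qed (use d in simp)
  moreover have "Suc ?t3 \<in> {1..3*M+1}" using s k by (simp add: t2_def)
  ultimately show ?thesis unfolding X_def by blast
qed

theorem lemma11:
  fixes n :: nat and \<rho> \<eta> \<epsilon> :: real
  assumes "n \<ge> 3"
    and "1 / real (n - 1) \<le> \<rho>" and "\<rho> < 1"
    and "\<eta> > 0"
    and "\<eta> \<le> real n * \<rho> / (2 * real (n - 1))"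
    and "\<epsilon> > 0"
  shows "rob_reachable_C4 n (\<lambda>_. \<rho>) \<eta>
           (E'_set n (2 * \<eta> * real (n - 1) / real n) \<epsilon>)"
proof -
  define c where "c = 2 * \<eta> * real (n - 1) / real n"
  define d where "d = min (min (\<eta>/3) (\<epsilon>/4)) (min ((1 - \<rho>)/6) (\<rho>/21))"
  define M where "M = nat \<lceil>2/d\<rceil>"
  define us where "us = (\<lambda>h. controller n \<rho> \<eta> c d M (length h - 1) (last h))"
  have n1: "0 < real (n - 1)" using assms(1) by simp
  have "0 < \<rho>" using assms(2) n1 by (meson divide_pos_pos less_le_trans zero_less_one)
  then have "0 < d" unfolding d_def using assms(3,4,6) by simp
  moreover have "d \<le> \<eta>/3" "d \<le> \<epsilon>/4" "d \<le> (1 - \<rho>)/6" "d \<le> \<rho>/21"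
    unfolding d_def by (meson min.cobounded1 min.cobounded2 order_trans)+
  ultimately have d: "0 < d" "3*d \<le> \<eta>" "4*d \<le> \<epsilon>" "6*d \<le> 1 - \<rho>" "21*d \<le> \<rho>"
    by (simp_all add: field_simps)
  have "c \<le> \<rho>"
  proof -
    have "\<eta> * (2 * real (n - 1)) \<le> real n * \<rho>" using assms(5) n1 by (simp add: le_divide_eq)
    then show ?thesis unfolding c_def using assms(1) by (simp add: divide_le_eq algebra_simps)
  qed
  moreover have "1 \<le> real M * d / 2"
  proof -
    have "2/d \<le> real M" unfolding M_def by linarith
    then show ?thesis using d(1) by (simp add: divide_le_eq mult.commute)
  qed
  ultimately have reach: "\<exists>t\<in>{1..3*M+1}. last (hist_C4 n (\<lambda>_. \<rho>) us b x0 t) \<in> E'_set n c \<epsilon>"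
    if "in_cube n x0" "\<forall>t<3*M+1. \<forall>i\<in>{1..n}. \<forall>j\<in>{1..n}. \<bar>b t j i\<bar> \<le> d" for x0 b
    by (rule controlled_trajectory_reaches[OF assms(1,2) d c_def _ _ that us_def])
  have us_bounded: "- \<eta> + d \<le> us h j i \<and> us h j i \<le> \<eta> - d" for h j i
    using controller_bounded[OF d(1,2), of n \<rho> c M "length h - 1" "last h" j i]
    unfolding us_def abs_le_iff by linarith
  show ?thesis
    unfolding rob_reachable_C4_def c_def[symmetric]
    using reach us_bounded d by (intro exI[of _ "3*M+1"] conjI exI[of _ d] allI impI disjI2
      exI[of _ "\<lambda>h i. d"] exI[of _ us]) auto
qed

end
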